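(* Let $A_\Gamma$ be an Artin group with monoid $A_\Gamma^+$. For any vertex $v=[\alpha]_T$ of $\mathcal D_\Gamma^+$, the map $\iota$ sends the upward link of $[\alpha]_T$ in $\mathcal D_\Gamma^+$ to a full subcomplex of the upward link of $\alpha A_T$ in $\mathcal D_\Gamma$.
   Context: Let $\Gamma$ be a finite simple graph with vertex set $S$, edges $(s,t)$ labelled by integers $m_{st}\ge2$. The Artin group $A_\Gamma$ has presentation $\langle S\mid sts\cdots=tst\cdots \ (\text{both of length } m_{st})\ \forall (s,t)\in E\rangle$ and the Artin monoid $A_\Gamma^+$ has the same positive presentation, regarded as a submonoid of $A_\Gamma$. For $T\subseteq S$, $A_T$, $A_T^+$ are the subgroup/submonoid generated by $T$; $\mathcal S^f$ is the set of $T\subseteq S$ whose Coxeter group $W_T$ (presentation of $A_T$ plus $s^2=e$) is finite. The Deligne complex $\mathcal D_\Gamma$ is the cube complex with vertices the cosets $gA_T$ ($g\in A_\Gamma$, $T\in\mathcal S^f$), ordered by inclusion, where for $gA_T\subseteq gA_{T'}$ the interval $[gA_T,gA_{T'}]$ spans a cube of dimension $|T'\setminus T|$. For $\alpha,\beta\in A_\Gamma^+$ write $\alpha\sim_T\beta$ if $\alpha t=\beta t'$ for some $t,t'\in A_T^+$; $\approx_T$ is its transitive closure and $[\alpha]_T$ the class of $\alpha$. The monoid Deligne complex $\mathcal D_\Gamma^+$ is the cube complex with vertices $[\alpha]_T$ ($\alpha\in A_\Gamma^+$, $T\in\mathcal S^f$) ordered by inclusion, where for $T_1\subseteq T_2$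 in $\mathcal S^f$ the interval $[[\alpha]_{T_1},[\alpha]_{T_2}]$ spans a cube of dimension $|T_2\setminus T_1|$. The map $\iota:\mathcal D_\Gamma^+\to\mathcal D_\Gamma$ sends $[\alpha]_T\mapsto\alpha A_T$ (an embedding of cube complexes). The link of a vertex $v$ in a cube complex is the simplicial complex with a $k$-simplex for each $(k+1)$-cube containing $v$ (vertices correspond to edges at $v$, i.e. to vertices adjacent to $v$). The upward (resp. downward) link of a vertex $v$ in $\mathcal D_\Gamma^+$ or $\mathcal D_\Gamma$ is the subcomplex of its link spanned by the vertices corresponding to adjacent vertices (cosets) that contain (resp. are contained in) the coset $v$. A subcomplex $K$ of a simplicial complex $L$ is full if any set of vertices of $K$ spanning a simplex in $L$ spans a simplex in $K$. *)

theory Defs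
  imports Main
begin

text \<open>Artin graph: finite vertex set S, symmetric irreflexive edge set E, labels m s t \<ge> 2.
 Non-edges carry no relation (m = infinity).\<close>

definition artin_graph :: "'a set \<Rightarrow> ('a \<times> 'a) set \<Rightarrow> ('a \<Rightarrow> 'a \<Rightarrow> nat) \<Rightarrow> bool" where
  "artin_graph S E m \<longleftrightarrow> finite S \<and> E \<subseteq> S \<times> S \<and> sym E \<and> (\<forall>s. (s, s) \<notin> E)
     \<and> (\<forall>s t. (s, t) \<in> E \<longrightarrow> 2 \<le> m s t \<and> m s t = m t s)"

type_synonym 'a word = "('a \<times> bool) list"

fun alt :: "'a \<Rightarrow> 'a \<Rightarrow> nat \<Rightarrow> 'a list" where
  "alt s t 0 = []"
| "alt s t (Suc n) = s # alt t s n"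

definition posw :: "'a list \<Rightarrow> 'a word" where
  "posw w = map (\<lambda>x. (x, True)) w"

text \<open>Word equivalence defining the Artin group A_Gamma (letters (s,True) = s, (s,False) = s^-1).\<close>
inductive artin_eq :: "'a set \<Rightarrow> ('a \<times> 'a) set \<Rightarrow> ('a \<Rightarrow> 'a \<Rightarrow> nat) \<Rightarrow> 'a word \<Rightarrow> 'a word \<Rightarrow> bool"
  for S E m where
  refl: "artin_eq S E m w w"
| sym: "artin_eq S E m u v \<Longrightarrow> artin_eq S E m v u"
| trans: "artin_eq S E m u v \<Longrightarrow> artin_eq S E m v w \<Longrightarrow> artin_eq S E m u w"
| cancel: "s \<in> S \<Longrightarrow> artin_eq S E m (u @ [(s, b), (s, \<not> b)] @ v) (u @ v)"
| braid: "(s, t) \<in> E \<Longrightarrow>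
     artin_eq S E m (u @ posw (alt s t (m s t)) @ v) (u @ posw (alt t s (m s t)) @ v)"

definition acls :: "'a set \<Rightarrow> ('a \<times> 'a) set \<Rightarrow> ('a \<Rightarrow> 'a \<Rightarrow> nat) \<Rightarrow> 'a word \<Rightarrow> 'a word set" where
  "acls S E m w = {u \<in> lists (S \<times> UNIV). artin_eq S E m u w}"

definition artin_group :: "'a set \<Rightarrow> ('a \<times> 'a) set \<Rightarrow> ('a \<Rightarrow> 'a \<Rightarrow> nat) \<Rightarrow> 'a word set set" where
  "artin_group S E m = acls S E m ` lists (S \<times> UNIV)"

definition pos_words :: "'a set \<Rightarrow> 'a word set" where
  "pos_words T = lists (T \<times> {True})"

text \<open>The Artin monoid, regarded as the submonoid of A_Gamma generated by S.\<close>
definition artin_monoid :: "'a set \<Rightarrow> ('a \<times> 'a) set \<Rightarrow> ('a \<Rightarrow> 'a \<Rightarrow> nat) \<Rightarrow> 'a word set set" where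
  "artin_monoid S E m = acls S E m ` pos_words S"

definition coset :: "'a set \<Rightarrow> ('a \<times> 'a) set \<Rightarrow> ('a \<Rightarrow> 'a \<Rightarrow> nat) \<Rightarrow> 'a word set \<Rightarrow> 'a set \<Rightarrow> 'a word set set" where
  "coset S E m g T = {acls S E m (a @ v) | a v. a \<in> g \<and> v \<in> lists (T \<times> UNIV)}"

inductive cox_eq :: "('a \<times> 'a) set \<Rightarrow> ('a \<Rightarrow> 'a \<Rightarrow> nat) \<Rightarrow> 'a set \<Rightarrow> 'a list \<Rightarrow> 'a list \<Rightarrow> bool"
  for E m T where
  refl: "cox_eq E m T w w"
| sym: "cox_eq E m T u v \<Longrightarrow> cox_eq E m T v u"
| trans: "cox_eq E m T u v \<Longrightarrow> cox_eq E m T v w \<Longrightarrow> cox_eq E m T u w"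
| square: "s \<in> T \<Longrightarrow> cox_eq E m T (u @ [s, s] @ v) (u @ v)"
| braid: "(s, t) \<in> E \<Longrightarrow> s \<in> T \<Longrightarrow> t \<in> T \<Longrightarrow>
     cox_eq E m T (u @ alt s t (m s t) @ v) (u @ alt t s (m s t) @ v)"

definition coxeter_finite :: "('a \<times> 'a) set \<Rightarrow> ('a \<Rightarrow> 'a \<Rightarrow> nat) \<Rightarrow> 'a set \<Rightarrow> bool" where
  "coxeter_finite E m T \<longleftrightarrow> finite ((\<lambda>w. {u \<in> lists T. cox_eq E m T u w}) ` lists T)"

definition Sf :: "'a set \<Rightarrow> ('a \<times> 'a) set \<Rightarrow> ('a \<Rightarrow> 'a \<Rightarrow> nat) \<Rightarrow> 'a set set" where
  "Sf S E m = {T. T \<subseteq> S \<and> coxeter_finite E m T}"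

definition simT :: "'a set \<Rightarrow> ('a \<times> 'a) set \<Rightarrow> ('a \<Rightarrow> 'a \<Rightarrow> nat) \<Rightarrow> 'a set \<Rightarrow> 'a word set \<Rightarrow> 'a word set \<Rightarrow> bool" where
  "simT S E m T \<alpha> \<beta> \<longleftrightarrow> \<alpha> \<in> artin_monoid S E m \<and> \<beta> \<in> artin_monoid S E m \<and>
     (\<exists>a b t t'. a \<in> \<alpha> \<and> b \<in> \<beta> \<and> t \<in> pos_words T \<and> t' \<in> pos_words T \<and>
        acls S E m (a @ t) = acls S E m (b @ t'))"

definition mcls :: "'a set \<Rightarrow> ('a \<times> 'a) set \<Rightarrow> ('a \<Rightarrow> 'a \<Rightarrow> nat) \<Rightarrow> 'a set \<Rightarrow> 'a word set \<Rightarrow> 'a word set set" where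
  "mcls S E m T \<alpha> = {\<beta>. (simT S E m T)\<^sup>*\<^sup>* \<alpha> \<beta>}"

text \<open>T0 with s toggled: the neighbour of vertex T0 in direction s.\<close>
definition toggle :: "'a set \<Rightarrow> 'a \<Rightarrow> 'a set" where
  "toggle T0 s = (if s \<in> T0 then T0 - {s} else insert s T0)"

text \<open>Link of vertex v in the Deligne complex D_Gamma: for every cube
  [g A_T1, g A_T2] (T1 strictly contained in T2, both in S^f) containing v = g A_T0,
  the simplex whose vertices are the neighbours of v in that cube.\<close>
definition linkD :: "'a set \<Rightarrow> ('a \<times> 'a) set \<Rightarrow> ('a \<Rightarrow> 'a \<Rightarrow> nat) \<Rightarrow> 'a word set set \<Rightarrow> 'a word set set set set" where
  "linkD S E m v = { {coset S E m g (toggle T0 s) | s. s \<in> T2 - T1} | g T0 T1 T2.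
      g \<in> artin_group S E m \<and> T1 \<in> Sf S E m \<and> T2 \<in> Sf S E m \<and> T1 \<subset> T2 \<and>
      T1 \<subseteq> T0 \<and> T0 \<subseteq> T2 \<and> coset S E m g T0 = v }"

definition uplinkD :: "'a set \<Rightarrow> ('a \<times> 'a) set \<Rightarrow> ('a \<Rightarrow> 'a \<Rightarrow> nat) \<Rightarrow> 'a word set set \<Rightarrow> 'a word set set set set" where
  "uplinkD S E m v = {\<sigma> \<in> linkD S E m v. \<forall>u \<in> \<sigma>. v \<subseteq> u}"

definition linkP :: "'a set \<Rightarrow> ('a \<times> 'a) set \<Rightarrow> ('a \<Rightarrow> 'a \<Rightarrow> nat) \<Rightarrow> 'a word set set \<Rightarrow> 'a word set set set set" where
  "linkP S E m v = { {mcls S E m (toggle T0 s) \<beta> | s. s \<in> T2 - T1} | \<beta> T0 T1 T2.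
      \<beta> \<in> artin_monoid S E m \<and> T1 \<in> Sf S E m \<and> T2 \<in> Sf S E m \<and> T1 \<subset> T2 \<and>
      T1 \<subseteq> T0 \<and> T0 \<subseteq> T2 \<and> mcls S E m T0 \<beta> = v }"

definition uplinkP :: "'a set \<Rightarrow> ('a \<times> 'a) set \<Rightarrow> ('a \<Rightarrow> 'a \<Rightarrow> nat) \<Rightarrow> 'a word set set \<Rightarrow> 'a word set set set set" where
  "uplinkP S E m v = {\<sigma> \<in> linkP S E m v. \<forall>u \<in> \<sigma>. v \<subseteq> u}"

definition iota_set :: "'a set \<Rightarrow> ('a \<times> 'a) set \<Rightarrow> ('a \<Rightarrow> 'a \<Rightarrow> nat) \<Rightarrow> 'a word set set set \<Rightarrow> 'a word set set set" where
  "iota_set S E m \<sigma> = {coset S E m \<alpha> T | \<alpha> T. \<alpha> \<in> artin_monoid S E m \<and> T \<in> Sf S E m \<and> mcls S E m T \<alpha> \<in> \<sigma>}"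

text \<open>K is a full subcomplex of L (complexes given by their simplices, as vertex sets).\<close>
definition full_subcomplex :: "'v set set \<Rightarrow> 'v set set \<Rightarrow> bool" where
  "full_subcomplex K L \<longleftrightarrow> K \<subseteq> L \<and> (\<forall>\<sigma> \<in> L. \<sigma> \<subseteq> \<Union>K \<longrightarrow> \<sigma> \<in> K)"

end

theory Submission
  imports Defs Complex_Main
begin

text \<open>
  Both upward links are spanned by the vertices obtained by adding one generator to \<open>T\<close>.
  In \<open>\<D>\<close>, an upward simplex at \<open>\<alpha>A\<^sub>T\<close> lives in a cube \<open>[gA\<^sub>T\<^sub>1, gA\<^sub>T\<^sub>2]\<close> with
  \<open>gA\<^sub>T\<^sub>0 = \<alpha>A\<^sub>T\<close>. Since \<open>gs \<in> gA\<^sub>U\<close> only if \<open>s \<in> U\<close>, this forces \<open>T\<^sub>0 = T\<close>, and the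
  upward condition forces \<open>T\<^sub>1 = T\<close> (otherwise some \<open>gA\<^bsub>T - {s}\<^esub>\<close> would lie below \<open>\<alpha>A\<^sub>T\<close>).
  So the simplex is \<open>{\<alpha>A\<^bsub>T \<union> {s}\<^esub> | s \<in> T\<^sub>2 - T}\<close>, the image of \<open>{[\<alpha>]\<^bsub>T \<union> {s}\<^esub>}\<close>.
  Conversely \<open>[\<beta>]\<^sub>U \<subseteq> [\<beta>']\<^sub>U\<^sub>'\<close> implies \<open>\<beta>A\<^sub>U \<subseteq> \<beta>'A\<^sub>U\<^sub>'\<close>. Hence \<open>\<iota>\<close> maps the upward link
  of \<open>[\<alpha>]\<^sub>T\<close> onto that of \<open>\<alpha>A\<^sub>T\<close>, and the image is trivially full.

  That \<open>gs \<notin> gA\<^sub>U\<close> for \<open>s \<notin> U\<close> is detected by Tits' geometric representation, which respects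
  the braid relations by Chebyshev identities at \<open>cos (pi / m)\<close>. That subsets of spherical sets
  are spherical (the intermediate vertices of a cube must be vertices of \<open>\<D>\<^sup>+\<close>) follows from
  its faithfulness on parabolic subgroups, proved via Tits' lemma on the positivity of roots.
\<close>

section \<open>Chebyshev polynomials and alternating words\<close>

text \<open>\<open>cheb c k\<close> is the Chebyshev polynomial of the second kind \<open>U\<^bsub>k-1\<^esub>(c)\<close>.\<close>

fun cheb :: "real \<Rightarrow> nat \<Rightarrow> real" where
  "cheb c 0 = 0"
| "cheb c (Suc 0) = 1"
| "cheb c (Suc (Suc k)) = 2 * c * cheb c (Suc k) - cheb c k"

lemma cheb_cos_mult_sin: "cheb (cos \<theta>) k * sin \<theta> = sin (real k * \<theta>)"
proof (induction "cos \<theta>" k rule: cheb.induct)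
  case (3 k)
  have sum: "real (Suc (Suc k)) * \<theta> = real (Suc k) * \<theta> + \<theta>"
    and diff: "real k * \<theta> = real (Suc k) * \<theta> - \<theta>"
    by (simp_all add: algebra_simps)
  have "sin (real (Suc (Suc k)) * \<theta>) = 2 * cos \<theta> * sin (real (Suc k) * \<theta>) - sin (real k * \<theta>)"
    unfolding sum diff sin_add sin_diff by (simp add: algebra_simps)
  with 3 show ?case by (simp add: algebra_simps)
qed simp_all

lemma cheb_1: "cheb 1 k = real k"
  by (induction "1::real" k rule: cheb.induct) simp_all

lemma
  assumes "2 \<le> M"
  shows cheb_cos_pi_div_self: "cheb (cos (pi / real M)) M = 0"
    and cheb_cos_pi_div_pred: "cheb (cos (pi / real M)) (M - 1) = 1"
    and cheb_cos_pi_div_Suc: "cheb (cos (pi / real M)) (Suc M) = -1"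
proof -
  let ?\<theta> = "pi / real M"
  have pos: "sin ?\<theta> > 0" using sin_pi_divide_n_gt_0[OF assms] .
  have M\<theta>: "real M * ?\<theta> = pi" using assms by simp
  then have "real (M - 1) * ?\<theta> = pi - ?\<theta>" and "real (Suc M) * ?\<theta> = pi + ?\<theta>"
    using assms by (simp_all add: of_nat_diff algebra_simps add_divide_distrib diff_divide_distrib)
  then have "cheb (cos ?\<theta>) M * sin ?\<theta> = 0 * sin ?\<theta>"
    and "cheb (cos ?\<theta>) (M - 1) * sin ?\<theta> = 1 * sin ?\<theta>"
    and "cheb (cos ?\<theta>) (Suc M) * sin ?\<theta> = (-1) * sin ?\<theta>"
    using M\<theta> by (simp_all add: cheb_cos_mult_sin sin_periodic_pi2)
  with pos show "cheb (cos ?\<theta>) M = 0" "cheb (cos ?\<theta>) (M - 1) = 1" "cheb (cos ?\<theta>) (Suc M) = -1"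
    by (metis mult_right_cancel less_irrefl)+
qed

lemma cheb_cos_pi_div_nonneg:
  assumes "2 \<le> M" and "k \<le> M"
  shows "0 \<le> cheb (cos (pi / real M)) k"
proof -
  have "real k * (pi / real M) \<le> real M * (pi / real M)"
    using assms(2) by (intro mult_right_mono) auto
  then have "0 \<le> cheb (cos (pi / real M)) k * sin (pi / real M)"
    using assms(1) unfolding cheb_cos_mult_sin by (intro sin_ge_zero) auto
  then show ?thesis
    using sin_pi_divide_n_gt_0[OF assms(1)] by (simp add: zero_le_mult_iff)
qed

lemma cos_pi_div_squared_less_1:
  assumes "2 \<le> M" shows "(cos (pi / real M))\<^sup>2 < 1"
  using sin_pi_divide_n_gt_0[OF assms] sin_cos_squared_add[of "pi / real M"]
  by (smt (verit) zero_less_power)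

lemma alt_snoc: "alt x y (Suc k) = alt x y k @ [if even k then x else y]"
  by (induction k arbitrary: x y) auto

lemma alt_add: "alt x y (a + b) = alt x y a @ alt (if even a then x else y) (if even a then y else x) b"
  by (induction a arbitrary: x y) auto

lemma set_alt_subset: "set (alt x y k) \<subseteq> {x, y}"
  by (induction k arbitrary: x y) auto

lemma length_alt [simp]: "length (alt x y k) = k"
  by (induction k arbitrary: x y) auto

lemma last_alt: "last (alt x y (Suc k)) = (if even k then x else y)"
  by (induction k arbitrary: x y) auto

lemma alternating_if_no_square:
  assumes "x \<noteq> y"
  shows "u \<in> lists {x, y} \<Longrightarrow> \<nexists>u1 u2 a. u = u1 @ a # a # u2 \<Longrightarrow> u \<noteq> [] \<Longrightarrow>
    \<exists>x' y'. (x' = x \<and> y' = y \<or> x' = y \<and> y' = x) \<and> u = alt x' y' (length u)"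
proof (induction u)
  case Nil
  then show ?case by simp
next
  case (Cons a u)
  show ?case
  proof (cases "u = []")
    case True
    then show ?thesis using Cons.prems assms by (cases "a = x") auto
  next
    case False
    have "\<nexists>u1 u2 a. u = u1 @ a # a # u2"
      using Cons.prems(2) by (metis append_Cons)
    then obtain x' y' where xy': "x' = x \<and> y' = y \<or> x' = y \<and> y' = x"
      and u: "u = alt x' y' (length u)"
      using Cons False by auto
    obtain n where n: "length u = Suc n" using False by (cases u) auto
    then have "u = x' # alt y' x' n" using u by (metis alt.simps(2))
    then have "a \<noteq> x'" using Cons.prems(2) by (metis append_Nil)
    then have "a = y'" using Cons.prems(1) xy' by auto
    then show ?thesis using u xy' by (metis alt.simps(2) length_Cons)
  qed
qed

section \<open>The geometric representation\<close>

locale artin_system =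
  fixes S :: "'a set" and E :: "('a \<times> 'a) set" and m :: "'a \<Rightarrow> 'a \<Rightarrow> nat"
  assumes artin_graph: "artin_graph S E m"
begin

lemma finite_S: "finite S"
  and edge_in_S: "(s, t) \<in> E \<Longrightarrow> s \<in> S \<and> t \<in> S"
  and edge_sym: "(s, t) \<in> E \<Longrightarrow> (t, s) \<in> E"
  and edge_irrefl: "(s, t) \<in> E \<Longrightarrow> s \<noteq> t"
  and edge_label_ge_2: "(s, t) \<in> E \<Longrightarrow> 2 \<le> m s t"
  and edge_label_sym: "(s, t) \<in> E \<Longrightarrow> m s t = m t s"
  using artin_graph unfolding artin_graph_def sym_def by blast+

text \<open>Tits' geometric representation of the Coxeter group on \<open>S \<Rightarrow> real\<close>: \<open>simple_root s\<close> is the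
  simple root \<open>\<alpha>\<^sub>s\<close>, \<open>bform\<close> the form with \<open>B(\<alpha>\<^sub>s, \<alpha>\<^sub>t) = -cos (pi / m s t)\<close>, where a
  non-edge means \<open>m s t = \<infinity>\<close> and hence \<open>B(\<alpha>\<^sub>s, \<alpha>\<^sub>t) = -1\<close>.\<close>

definition bmat :: "'a \<Rightarrow> 'a \<Rightarrow> real" where
  "bmat x y = (if x = y then 1 else if (x, y) \<in> E then - cos (pi / real (m x y)) else -1)"

definition simple_root :: "'a \<Rightarrow> 'a \<Rightarrow> real" where
  "simple_root x = (\<lambda>y. if y = x then 1 else 0)"

definition bform :: "('a \<Rightarrow> real) \<Rightarrow> ('a \<Rightarrow> real) \<Rightarrow> real" where
  "bform u v = (\<Sum>i\<in>S. \<Sum>j\<in>S. u i * bmat i j * v j)"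

definition reflection :: "'a \<Rightarrow> ('a \<Rightarrow> real) \<Rightarrow> ('a \<Rightarrow> real)" where
  "reflection x v = (\<lambda>y. v y - 2 * bform (simple_root x) v * simple_root x y)"

fun rho :: "'a list \<Rightarrow> ('a \<Rightarrow> real) \<Rightarrow> ('a \<Rightarrow> real)" where
  "rho [] v = v"
| "rho (x # w) v = reflection x (rho w v)"

lemma bmat_self [simp]: "bmat x x = 1"
  by (simp add: bmat_def)

lemma bmat_sym: "bmat x y = bmat y x"
  unfolding bmat_def using edge_sym edge_label_sym by auto

lemma bmat_edge_squared_less_1: "(s, t) \<in> E \<Longrightarrow> (bmat s t)\<^sup>2 < 1"
  using edge_irrefl edge_label_ge_2 cos_pi_div_squared_less_1 by (simp add: bmat_def)

lemma cheb_bmat_nonneg: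
  assumes "x \<noteq> y" and "(x, y) \<in> E \<Longrightarrow> k \<le> m x y"
  shows "0 \<le> cheb (- bmat x y) k"
proof (cases "(x, y) \<in> E")
  case True
  then show ?thesis
    using assms cheb_cos_pi_div_nonneg[OF edge_label_ge_2[OF True]] by (simp add: bmat_def)
next
  case False
  then show ?thesis using assms(1) by (simp add: bmat_def cheb_1)
qed

lemma bform_sym: "bform u v = bform v u"
  unfolding bform_def by (subst sum.swap) (simp add: bmat_sym mult.commute mult.left_commute)

lemma bform_linear_right: "bform u (\<lambda>y. a * v y + b * w y) = a * bform u v + b * bform u w"
  unfolding bform_def by (simp add: algebra_simps sum.distrib sum_distrib_left)

lemma bform_diff_right: "bform u (\<lambda>y. v y - c * w y) = bform u v - c * bform u w"
  unfolding bform_def by (simp add: algebra_simps sum_subtractf sum_distrib_left)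

lemma bform_diff_left: "bform (\<lambda>y. v y - c * w y) u = bform v u - c * bform w u"
  using bform_diff_right bform_sym by metis

lemma bform_root_root: "x \<in> S \<Longrightarrow> y \<in> S \<Longrightarrow> bform (simple_root x) (simple_root y) = bmat x y"
  using finite_S
  by (simp add: bform_def simple_root_def if_distrib[of "\<lambda>c. c * _"] if_distrib[of "\<lambda>c. _ * c"] sum.delta
      cong: if_cong)

lemma bform_root_self: "x \<in> S \<Longrightarrow> bform (simple_root x) (simple_root x) = 1"
  by (simp add: bform_root_root)

lemma reflection_linear:
  "reflection x (\<lambda>y. a * u y + b * v y) = (\<lambda>y. a * reflection x u y + b * reflection x v y)"
  unfolding reflection_def by (rule ext) (simp add: bform_linear_right algebra_simps)

lemma rho_append: "rho (u @ w) v = rho u (rho w v)"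
  by (induction u) auto

lemma rho_linear: "rho w (\<lambda>y. a * u y + b * v y) = (\<lambda>y. a * rho w u y + b * rho w v y)"
  by (induction w) (auto simp: reflection_linear)

lemma reflection_root:
  "x \<in> S \<Longrightarrow> y \<in> S \<Longrightarrow>
    reflection x (simple_root y) = (\<lambda>z. simple_root y z - 2 * bmat x y * simple_root x z)"
  by (simp add: reflection_def bform_root_root)

lemma reflection_root_self: "x \<in> S \<Longrightarrow> reflection x (simple_root x) = (\<lambda>z. - simple_root x z)"
  by (simp add: reflection_root)

lemma bform_root_reflection: "x \<in> S \<Longrightarrow> bform (simple_root x) (reflection x v) = - bform (simple_root x) v"
  by (simp add: reflection_def bform_diff_right bform_root_self)

lemma reflection_involutive: "x \<in> S \<Longrightarrow> reflection x (reflection x v) = v"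
  by (simp add: reflection_def[of x "reflection x v"] bform_root_reflection) (simp add: reflection_def)

lemma bform_reflection: "x \<in> S \<Longrightarrow> bform (reflection x u) (reflection x v) = bform u v"
  by (simp add: reflection_def[of x u] bform_diff_left bform_root_reflection)
    (simp add: reflection_def bform_diff_right bform_sym[of u])

lemma rho_isometry: "set w \<subseteq> S \<Longrightarrow> bform (rho w u) (rho w v) = bform u v"
  by (induction w) (auto simp: bform_reflection)

lemma rho_append_rev: "set w \<subseteq> S \<Longrightarrow> rho (w @ rev w) v = v"
  by (induction w arbitrary: v) (auto simp: rho_append reflection_involutive)

lemma rho_coordinate_unchanged: "t \<notin> set w \<Longrightarrow> rho w v t = v t"
  by (induction w) (auto simp: reflection_def simple_root_def)

lemma rho_in_span:
  "set w \<subseteq> {s, t} \<Longrightarrow> \<exists>p q. rho w v = (\<lambda>y. v y + p * simple_root s y + q * simple_root t y)"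
proof (induction w)
  case Nil
  show ?case by (rule exI[of _ 0], rule exI[of _ 0]) simp
next
  case (Cons x w)
  then obtain p q where pq: "rho w v = (\<lambda>y. v y + p * simple_root s y + q * simple_root t y)" by auto
  consider "x = s" | "x = t" using Cons.prems by auto
  then show ?case
  proof cases
    case 1
    show ?thesis using pq 1
      by (intro exI[of _ "p - 2 * bform (simple_root x) (rho w v)"] exI[of _ q])
        (auto simp: reflection_def algebra_simps)
  next
    case 2
    show ?thesis using pq 2
      by (intro exI[of _ p] exI[of _ "q - 2 * bform (simple_root x) (rho w v)"])
        (auto simp: reflection_def algebra_simps)
  qed
qed

lemma bform_add_span:
  "bform u (\<lambda>y. v y + p * simple_root s y + q * simple_root t y) =
    bform u v + p * bform u (simple_root s) + q * bform u (simple_root t)"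
  unfolding bform_def by (simp add: algebra_simps sum.distrib sum_distrib_left)

text \<open>On the span of \<open>\<alpha>\<^sub>s, \<alpha>\<^sub>t\<close> the form has Gram determinant \<open>1 - (bmat s t)\<^sup>2\<close>; when this is
  nonzero, an isometry moving vectors only within that span is determined by its values on
  \<open>\<alpha>\<^sub>s\<close> and \<open>\<alpha>\<^sub>t\<close>.\<close>

lemma rho_eq_id_if_fixes_roots:
  assumes w: "set w \<subseteq> {s, t}" and st: "s \<in> S" "t \<in> S" "s \<noteq> t" and det: "(bmat s t)\<^sup>2 < 1"
    and fixed: "rho w (simple_root s) = simple_root s" "rho w (simple_root t) = simple_root t"
  shows "rho w v = v"
proof -
  obtain p q where pq: "rho w v = (\<lambda>y. v y + p * simple_root s y + q * simple_root t y)"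
    using rho_in_span[OF w] by blast
  have "set w \<subseteq> S" using w st by auto
  then have "bform (simple_root s) (rho w v) = bform (simple_root s) v"
    and "bform (simple_root t) (rho w v) = bform (simple_root t) v"
    using rho_isometry[of w "simple_root s" v] rho_isometry[of w "simple_root t" v] fixed by simp_all
  then have eqs: "p + q * bmat s t = 0" "p * bmat s t + q = 0"
    using st by (simp_all add: pq bform_add_span bform_root_root bmat_sym)
  have "q * (1 - (bmat s t)\<^sup>2) = (p * bmat s t + q) - bmat s t * (p + q * bmat s t)"
    by (simp add: power2_eq_square algebra_simps)
  then have "q = 0" using det eqs by simp
  then have "p = 0" using eqs by simp
  with \<open>q = 0\<close> show ?thesis by (simp add: pq)
qed

lemma rho_eq_if_eq_on_roots:
  assumes w: "set w1 \<subseteq> {s, t}" "set w2 \<subseteq> {s, t}"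
    and st: "s \<in> S" "t \<in> S" "s \<noteq> t" and det: "(bmat s t)\<^sup>2 < 1"
    and agree: "rho w1 (simple_root s) = rho w2 (simple_root s)"
      "rho w1 (simple_root t) = rho w2 (simple_root t)"
  shows "rho w1 = rho w2"
proof
  fix v
  have w2S: "set (rev w2) \<subseteq> S" using w st by auto
  have undo: "rho (rev w2) (rho w2 u) = u" for u
    using rho_append_rev[OF w2S, of u] by (simp add: rho_append)
  have "rho (rev w2 @ w1) (simple_root s) = simple_root s"
    and "rho (rev w2 @ w1) (simple_root t) = simple_root t"
    by (simp_all only: rho_append agree undo)
  moreover have "set (rev w2 @ w1) \<subseteq> {s, t}" using w by auto
  ultimately have "rho (rev w2 @ w1) v = v"
    using rho_eq_id_if_fixes_roots st det by blast
  then have "rho w2 (rho (rev w2 @ w1) v) = rho w2 v" by simp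
  moreover have "rho w2 (rho (rev w2) u) = u" for u
    using rho_append_rev[of w2 u] w st by (auto simp: rho_append)
  ultimately show "rho w1 v = rho w2 v" by (simp add: rho_append)
qed

lemma rho_alt_root:
  assumes "x \<in> S" "y \<in> S" "x \<noteq> y"
  shows "rho (alt x y k) (simple_root (if even k then x else y)) =
    (\<lambda>z. cheb (- bmat x y) (Suc k) * simple_root x z + cheb (- bmat x y) k * simple_root y z)"
  using assms
proof (induction k arbitrary: x y)
  case 0
  then show ?case by simp
next
  case (Suc k)
  let ?c = "- bmat x y"
  have IH: "rho (alt y x k) (simple_root (if even k then y else x)) =
      (\<lambda>z. cheb ?c (Suc k) * simple_root y z + cheb ?c k * simple_root x z)"
    using Suc by (simp add: bmat_sym)
  have "alt x y (Suc k) = x # alt y x k"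
    and "(if even (Suc k) then x else y) = (if even k then y else x)" by simp_all
  then have "rho (alt x y (Suc k)) (simple_root (if even (Suc k) then x else y)) =
     reflection x (\<lambda>z. cheb ?c (Suc k) * simple_root y z + cheb ?c k * simple_root x z)"
    by (simp only: rho.simps IH)
  also have "\<dots> = (\<lambda>z. cheb ?c (Suc k) * reflection x (simple_root y) z
      + cheb ?c k * reflection x (simple_root x) z)"
    by (rule reflection_linear)
  also have "\<dots> = (\<lambda>z. cheb ?c (Suc (Suc k)) * simple_root x z + cheb ?c (Suc k) * simple_root y z)"
    using Suc.prems by (simp add: reflection_root reflection_root_self algebra_simps)
  finally show ?case .
qed

lemma rho_alt_root_last:
  assumes "x \<in> S" "y \<in> S" "x \<noteq> y"
  shows "rho (alt x y (Suc k)) (simple_root (if even k then x else y)) =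
    (\<lambda>z. - (cheb (- bmat x y) (Suc k) * simple_root x z + cheb (- bmat x y) k * simple_root y z))"
proof -
  let ?z = "if even k then x else y"
  have "?z \<in> S" using assms by simp
  then have "rho (alt x y (Suc k)) (simple_root ?z) =
      rho (alt x y k) (\<lambda>u. (-1) * simple_root ?z u + 0 * simple_root x u)"
    by (simp only: alt_snoc rho_append rho.simps reflection_root_self) simp
  also have "\<dots> = (\<lambda>u. - rho (alt x y k) (simple_root ?z) u)"
    by (simp only: rho_linear) simp
  finally show ?thesis by (simp add: rho_alt_root[OF assms])
qed

lemma rho_braid:
  assumes "(s, t) \<in> E"
  shows "rho (alt s t (m s t)) = rho (alt t s (m s t))"
proof -
  define M where "M = m s t"
  have M: "2 \<le> M" using edge_label_ge_2[OF assms] by (simp add: M_def)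
  then obtain K where K: "M = Suc K" by (cases M) auto
  have st: "s \<in> S" "t \<in> S" "s \<noteq> t" using assms edge_in_S edge_irrefl by auto
  have "- bmat s t = cos (pi / real M)" using st assms by (simp add: bmat_def M_def)
  moreover from this have "- bmat t s = cos (pi / real M)" by (simp add: bmat_sym)
  ultimately have cheb_st:
      "cheb (- bmat s t) M = 0" "cheb (- bmat s t) K = 1" "cheb (- bmat s t) (Suc M) = -1"
    and cheb_ts:
      "cheb (- bmat t s) M = 0" "cheb (- bmat t s) K = 1" "cheb (- bmat t s) (Suc M) = -1"
    using cheb_cos_pi_div_self[OF M] cheb_cos_pi_div_pred[OF M] cheb_cos_pi_div_Suc[OF M] K
    by simp_all
  txt \<open>Both products send the roots at the two ends of the braid to \<open>-\<alpha>\<^sub>s\<close> and \<open>-\<alpha>\<^sub>t\<close>.\<close>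
  have "rho (alt s t M) (simple_root (if even M then s else t)) = (\<lambda>z. - simple_root s z)"
    and "rho (alt t s M) (simple_root (if even M then t else s)) = (\<lambda>z. - simple_root t z)"
    using rho_alt_root[of s t M] rho_alt_root[of t s M] st cheb_st cheb_ts by simp_all
  moreover have "rho (alt s t M) (simple_root (if even K then s else t)) = (\<lambda>z. - simple_root t z)"
    and "rho (alt t s M) (simple_root (if even K then t else s)) = (\<lambda>z. - simple_root s z)"
    using rho_alt_root_last[of s t K] rho_alt_root_last[of t s K] st cheb_st cheb_ts K by simp_all
  ultimately have "rho (alt s t M) (simple_root x) = rho (alt t s M) (simple_root x)"
    if "x \<in> {s, t}" for x
    using that K by (cases "even K") auto
  then show ?thesis
    unfolding M_def[symmetric]
    using rho_eq_if_eq_on_roots[of "alt s t M" s t "alt t s M"] set_alt_subset[of s t M]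
      set_alt_subset[of t s M] st bmat_edge_squared_less_1[OF assms]
    by (auto simp: insert_commute)
qed

lemma rho_cox_eq:
  assumes "J \<subseteq> S"
  shows "cox_eq E m J u w \<Longrightarrow> rho u = rho w"
proof (induction rule: cox_eq.induct)
  case (square s u v)
  then show ?case using assms by (auto simp: rho_append reflection_involutive fun_eq_iff)
next
  case (braid s t u v)
  then show ?case using fun_cong[OF rho_braid[OF braid(1)]] by (intro ext) (simp add: rho_append)
qed auto

lemma map_fst_posw [simp]: "map fst (posw w) = w"
  unfolding posw_def by (induction w) auto

lemma rho_artin_eq: "artin_eq S E m u w \<Longrightarrow> rho (map fst u) = rho (map fst w)"
proof (induction rule: artin_eq.induct)
  case (cancel s u b v)
  then show ?case by (auto simp: rho_append reflection_involutive fun_eq_iff)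
next
  case (braid s t u v)
  then show ?case using fun_cong[OF rho_braid[OF braid(1)]] by (intro ext) (simp add: rho_append)
qed auto

end

section \<open>Length in parabolic subgroups and Tits' lemma\<close>

locale coxeter_parabolic = artin_system +
  fixes J :: "'a set"
  assumes J_subset: "J \<subseteq> S"
begin

abbreviation ceq :: "'a list \<Rightarrow> 'a list \<Rightarrow> bool" where
  "ceq \<equiv> cox_eq E m J"

lemma ceq_sym: "ceq u w \<Longrightarrow> ceq w u"
  and ceq_trans: "ceq u v \<Longrightarrow> ceq v w \<Longrightarrow> ceq u w"
  by (fact cox_eq.sym cox_eq.trans)+

lemma ceq_append_cong: "ceq u w \<Longrightarrow> ceq (x @ u @ y) (x @ w @ y)"
proof (induction rule: cox_eq.induct)
  case (refl w)
  show ?case by (rule cox_eq.refl)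
next
  case (sym u v)
  show ?case using sym.IH by (rule ceq_sym)
next
  case (trans u v w)
  show ?case using trans.IH by (rule ceq_trans)
next
  case (square s u v)
  then show ?case using cox_eq.square[of s J E m "x @ u" "v @ y"] by simp
next
  case (braid s t u v)
  then show ?case using cox_eq.braid[of s t E J m "x @ u" "v @ y"] by simp
qed

lemma ceq_snoc_square: "s \<in> J \<Longrightarrow> ceq (u @ [s, s]) u"
  using cox_eq.square[of s J E m u "[]"] by simp

lemma ceq_append_rev: "w \<in> lists J \<Longrightarrow> ceq (w @ rev w) []"
proof (induction w)
  case (Cons x w)
  then have "ceq ([x] @ (w @ rev w) @ [x]) ([x] @ [] @ [x])" by (intro ceq_append_cong) auto
  moreover have "ceq ([] @ [x, x] @ []) ([] @ [])" using Cons by (intro cox_eq.square) auto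
  ultimately show ?case using ceq_trans[of "x # w @ rev w @ [x]" "[x, x]" "[]"] by simp
qed (simp add: cox_eq.refl)

lemma ceq_length_parity: "ceq u w \<Longrightarrow> even (length u) = even (length w)"
  by (induction rule: cox_eq.induct) auto

lemma ceq_rho: "ceq u w \<Longrightarrow> rho u = rho w"
  using rho_cox_eq[OF J_subset] .

text \<open>The length in \<open>W\<^sub>J\<close> of the element represented by \<open>w\<close>, measured with generators
  \<open>I \<subseteq> J\<close>; it is only used for \<open>w \<in> lists I\<close>, where the \<open>LEAST\<close> is attained.\<close>

definition wlen :: "'a set \<Rightarrow> 'a list \<Rightarrow> nat" where
  "wlen I w = (LEAST n. \<exists>u \<in> lists I. length u = n \<and> ceq u w)"

definition reduced :: "'a set \<Rightarrow> 'a list \<Rightarrow> bool" where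
  "reduced I u \<longleftrightarrow> u \<in> lists I \<and> wlen I u = length u"

lemma wlen_le: "u \<in> lists I \<Longrightarrow> ceq u w \<Longrightarrow> wlen I w \<le> length u"
  unfolding wlen_def by (rule Least_le) blast

lemma wlen_le_length: "w \<in> lists I \<Longrightarrow> wlen I w \<le> length w"
  using wlen_le cox_eq.refl by blast

lemma wlen_ceq: "ceq w w' \<Longrightarrow> wlen I w = wlen I w'"
proof -
  assume "ceq w w'"
  then have "ceq u w = ceq u w'" for u by (meson ceq_sym ceq_trans)
  then show ?thesis unfolding wlen_def by simp
qed

lemma obtain_reduced:
  assumes "w \<in> lists I"
  obtains u where "reduced I u" "ceq u w"
proof -
  obtain u where u: "u \<in> lists I" "length u = wlen I w" "ceq u w"
    unfolding wlen_def using LeastI[of "\<lambda>n. \<exists>u \<in> lists I. length u = n \<and> ceq u w" "length w"]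
      assms cox_eq.refl by blast
  then have "reduced I u" using wlen_ceq[OF u(3)] by (simp add: reduced_def)
  then show thesis using u(3) by (rule that)
qed

lemma wlen_parity: "w \<in> lists I \<Longrightarrow> even (wlen I w) = even (length w)"
proof -
  assume "w \<in> lists I"
  then obtain u where "reduced I u" "ceq u w" by (rule obtain_reduced)
  then show ?thesis using wlen_ceq[of u w I] ceq_length_parity[of u w] by (simp add: reduced_def)
qed

lemma wlen_append: "a \<in> lists I \<Longrightarrow> b \<in> lists I \<Longrightarrow> wlen I (a @ b) \<le> wlen I a + wlen I b"
proof -
  assume "a \<in> lists I" "b \<in> lists I"
  obtain a' where a': "reduced I a'" "ceq a' a" using obtain_reduced[OF \<open>a \<in> lists I\<close>] .
  obtain b' where b': "reduced I b'" "ceq b' b" using obtain_reduced[OF \<open>b \<in> lists I\<close>] .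
  have "ceq (a' @ b') (a @ b')" using ceq_append_cong[OF a'(2), of "[]" b'] by simp
  moreover have "ceq (a @ b') (a @ b)" using ceq_append_cong[OF b'(2), of a "[]"] by simp
  ultimately have "ceq (a' @ b') (a @ b)" by (rule ceq_trans)
  moreover have "a' @ b' \<in> lists I" using a' b' by (simp add: reduced_def)
  ultimately have "wlen I (a @ b) \<le> length (a' @ b')" by (rule wlen_le[rotated])
  moreover have "length a' = wlen I a" "length b' = wlen I b"
    using a' b' wlen_ceq[of a' a I] wlen_ceq[of b' b I] by (simp_all add: reduced_def)
  ultimately show ?thesis by simp
qed

lemma wlen_antimono: "I \<subseteq> I' \<Longrightarrow> w \<in> lists I \<Longrightarrow> wlen I' w \<le> wlen I w"
proof -
  assume "I \<subseteq> I'" "w \<in> lists I"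
  then obtain u where "reduced I u" "ceq u w" using obtain_reduced by blast
  then show ?thesis
    using \<open>I \<subseteq> I'\<close> wlen_le[of u I' w] wlen_ceq[of u w I] by (auto simp: reduced_def)
qed

lemma wlen_singleton: "x \<in> I \<Longrightarrow> wlen I [x] = 1"
  using wlen_le_length[of "[x]" I] wlen_parity[of "[x]" I] by (auto simp: le_Suc_eq)

lemma wlen_snoc:
  assumes "I \<subseteq> J" "w \<in> lists I" "s \<in> I"
  shows "wlen I (w @ [s]) = Suc (wlen I w) \<or> wlen I w = Suc (wlen I (w @ [s]))"
proof -
  have up: "wlen I (w @ [s]) \<le> Suc (wlen I w)"
    using wlen_append[of w I "[s]"] wlen_singleton assms by simp
  have "ceq ((w @ [s]) @ [s]) w" using ceq_snoc_square assms by auto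
  then have "wlen I w = wlen I ((w @ [s]) @ [s])" by (rule wlen_ceq[symmetric])
  also have "\<dots> \<le> Suc (wlen I (w @ [s]))"
    using wlen_append[of "w @ [s]" I "[s]"] wlen_singleton assms by simp
  finally have down: "wlen I w \<le> Suc (wlen I (w @ [s]))" .
  have "even (wlen I (w @ [s])) \<noteq> even (wlen I w)"
    using wlen_parity assms by simp
  moreover have "\<And>a b :: nat. a \<le> Suc b \<Longrightarrow> b \<le> Suc a \<Longrightarrow> even a \<noteq> even b \<Longrightarrow> a = Suc b \<or> b = Suc a"
    by (auto simp: le_Suc_eq dest: le_antisym)
  ultimately show ?thesis using up down by blast
qed

lemma wlen_snoc_last_less:
  assumes "I \<subseteq> J" "u \<in> lists I" "u \<noteq> []"
  shows "wlen I (u @ [last u]) < length u"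
proof -
  have "ceq (butlast u @ [last u, last u]) (butlast u)"
    using assms by (intro ceq_snoc_square) auto
  moreover have "u @ [last u] = butlast u @ [last u, last u]"
    using assms(3) by (metis append_butlast_last_id append_Cons append_Nil append_assoc)
  ultimately have "wlen I (u @ [last u]) = wlen I (butlast u)" using wlen_ceq by metis
  also have "\<dots> \<le> length (butlast u)"
    using assms(2) by (intro wlen_le_length) (auto dest: in_set_butlastD)
  also have "\<dots> < length u" using assms(3) by simp
  finally show ?thesis .
qed

lemma reduced_butlast:
  assumes "reduced I u" "u \<noteq> []"
  shows "reduced I (butlast u)"
proof -
  have u: "u = butlast u @ [last u]" using assms(2) by simp
  have "butlast u \<in> lists I" "last u \<in> I"
    using assms unfolding reduced_def by (auto dest: in_set_butlastD)
  then have "wlen I u \<le> wlen I (butlast u) + 1"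
    using wlen_append[of "butlast u" I "[last u]"] wlen_singleton u by simp
  then show ?thesis
    using assms(1) wlen_le_length[OF \<open>butlast u \<in> lists I\<close>] \<open>butlast u \<in> lists I\<close>
    by (simp add: reduced_def)
qed

lemma reduced_last_ne:
  assumes "I \<subseteq> J" "reduced I r" "r \<noteq> []" "wlen I r < wlen I (r @ [s])"
  shows "last r \<noteq> s"
  using wlen_snoc_last_less[OF assms(1) _ assms(3)] assms(2,4) unfolding reduced_def by auto

lemma reduced_no_square:
  assumes "I \<subseteq> J" "reduced I u"
  shows "\<nexists>u1 u2 a. u = u1 @ a # a # u2"
proof
  assume "\<exists>u1 u2 a. u = u1 @ a # a # u2"
  then obtain u1 u2 a where u: "u = u1 @ a # a # u2" by blast
  then have "a \<in> J" using assms unfolding reduced_def by auto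
  then have "ceq u (u1 @ u2)" using cox_eq.square[of a J E m u1 u2] u by simp
  then have "wlen I u \<le> length (u1 @ u2)"
    using assms u unfolding reduced_def by (intro wlen_le) (auto dest: ceq_sym)
  then show False using assms u unfolding reduced_def by simp
qed

text \<open>If \<open>k \<ge> m x y\<close>, a braid move on the last \<open>m x y\<close> letters gives a word of the same
  length ending in the letter that was supposed to lengthen it.\<close>

lemma reduced_alt_length_less_label:
  assumes xy: "(x, y) \<in> E" "x \<in> J" "y \<in> J"
    and red: "reduced {x, y} (alt x y k)"
    and up: "wlen {x, y} (alt x y k) < wlen {x, y} (alt x y k @ [if even k then x else y])"
  shows "k < m x y"
proof (rule ccontr)
  define M where "M = m x y"
  define d where "d = k - M"
  define z where "z = (if even k then x else y)"
  define p where "p = (if even d then x else y)"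
  define q where "q = (if even d then y else x)"
  define pre where "pre = alt x y d"
  assume "\<not> k < m x y"
  then have k: "k = d + M" by (simp add: M_def d_def)
  have M: "2 \<le> M" using edge_label_ge_2[OF xy(1)] by (simp add: M_def)
  then obtain M' where M': "M = Suc M'" by (cases M) auto
  have u: "alt x y k = pre @ alt p q M"
    using alt_add[of x y d M] k unfolding p_def q_def pre_def by metis
  have pq: "(p, q) \<in> E" "m p q = M" "p \<in> J" "q \<in> J"
    using xy edge_sym edge_label_sym unfolding p_def q_def M_def by auto
  define u' where "u' = pre @ alt q p M"
  have "ceq (pre @ alt p q (m p q) @ []) (pre @ alt q p (m p q) @ [])"
    by (rule cox_eq.braid[OF pq(1,3,4)])
  then have "ceq (alt x y k) u'" using u pq(2) unfolding u'_def by simp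
  then have "wlen {x, y} (alt x y k @ [z]) = wlen {x, y} (u' @ [z])"
    using ceq_append_cong[of "alt x y k" u' "[]" "[z]"] wlen_ceq by simp
  moreover have "last u' = z"
  proof -
    have "last u' = (if even M' then q else p)" using last_alt[of q p M'] by (simp add: u'_def M')
    moreover have "even k = (even d \<noteq> even M')" using k M' by simp
    ultimately show ?thesis unfolding z_def p_def q_def by auto
  qed
  moreover have "u' \<in> lists {x, y}" "u' \<noteq> []"
    using set_alt_subset[of x y d] set_alt_subset[of q p M] xy
    unfolding u'_def pre_def p_def q_def M' by auto
  ultimately have "wlen {x, y} (alt x y k @ [z]) < length u'"
    using wlen_snoc_last_less[of "{x, y}" u'] xy by simp
  moreover have "length u' = wlen {x, y} (alt x y k)"
    using red u unfolding u'_def reduced_def by simp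
  ultimately show False using up unfolding z_def by simp
qed

lemma dihedral_root_nonneg:
  assumes st: "s \<in> J" "t \<in> J" "s \<noteq> t"
    and red: "reduced {s, t} u" and up: "wlen {s, t} u < wlen {s, t} (u @ [s])"
  shows "\<exists>a b. 0 \<le> a \<and> 0 \<le> b \<and>
    rho u (simple_root s) = (\<lambda>z. a * simple_root s z + b * simple_root t z)"
proof (cases "u = []")
  case True
  then show ?thesis by (intro exI[of _ 1] exI[of _ 0]) simp
next
  case False
  have stJ: "{s, t} \<subseteq> J" using st by simp
  have "u \<in> lists {s, t}" using red by (simp add: reduced_def)
  with alternating_if_no_square[OF st(3) this reduced_no_square[OF stJ red] False]
  obtain x y where xy: "x = s \<and> y = t \<or> x = t \<and> y = s" and u: "u = alt x y (length u)"
    by blast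
  define k where "k = length u"
  then obtain k' where k': "k = Suc k'" using False by (cases u) auto
  have "last u \<noteq> s" using reduced_last_ne[OF stJ red False up] .
  then have s_next: "s = (if even k then x else y)"
    using last_alt[of x y k'] u xy st(3) unfolding k_def[symmetric] k' by auto
  have xyS: "x \<in> S" "y \<in> S" "x \<noteq> y" using xy st J_subset by auto
  define c where "c = - bmat x y"
  have rho_u:
    "rho u (simple_root s) = (\<lambda>z. cheb c (Suc k) * simple_root x z + cheb c k * simple_root y z)"
    using rho_alt_root[OF xyS, of k] s_next u unfolding c_def k_def by simp
  have "k < m x y" if "(x, y) \<in> E"
    using reduced_alt_length_less_label[OF that, of k] xy st red up s_next u
    unfolding k_def by (auto simp: insert_commute)
  then have nonneg: "0 \<le> cheb c (Suc k) \<and> 0 \<le> cheb c k"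
    using cheb_bmat_nonneg[OF xyS(3)] unfolding c_def by fastforce
  from xy show ?thesis
  proof
    assume "x = s \<and> y = t"
    then show ?thesis using rho_u nonneg by blast
  next
    assume "x = t \<and> y = s"
    then show ?thesis using rho_u nonneg by (intro exI[of _ "cheb c k"] exI[of _ "cheb c (Suc k)"]) auto
  qed
qed

text \<open>Among factorizations \<open>w = v y\<close> with \<open>y \<in> W\<^sub>I\<close> and additive lengths, one with \<open>v\<close> shortest
  has \<open>\<ell>(vx) > \<ell>(v)\<close> for \<open>x \<in> I\<close>: otherwise \<open>(vx)(xy)\<close> would be a factorization with a
  shorter left factor.\<close>

lemma obtain_minimal_factorization:
  assumes I: "I \<subseteq> J"
    and v0: "v0 \<in> lists J" "y0 \<in> lists I" "ceq (v0 @ y0) w" "wlen J v0 + wlen I y0 = wlen J w"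
  obtains v y where "v \<in> lists J" "y \<in> lists I" "ceq (v @ y) w" "wlen J v + wlen I y = wlen J w"
    "wlen J v \<le> wlen J v0" "\<And>x. x \<in> I \<Longrightarrow> wlen J v < wlen J (v @ [x])"
proof -
  define Q where "Q k \<longleftrightarrow> (\<exists>v y. v \<in> lists J \<and> y \<in> lists I \<and> ceq (v @ y) w \<and>
    wlen J v = k \<and> wlen J v + wlen I y = wlen J w)" for k
  define k0 where "k0 = (LEAST k. Q k)"
  have "Q (wlen J v0)" using v0 unfolding Q_def by blast
  then have "Q k0" "k0 \<le> wlen J v0" unfolding k0_def by (auto intro: LeastI Least_le)
  then obtain v y where vy: "v \<in> lists J" "y \<in> lists I" "ceq (v @ y) w" "wlen J v = k0"
    "wlen J v + wlen I y = wlen J w"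
    unfolding Q_def by blast
  have "wlen J v < wlen J (v @ [x])" if x: "x \<in> I" for x
  proof (rule ccontr)
    assume "\<not> wlen J v < wlen J (v @ [x])"
    then have shorter: "wlen J v = Suc (wlen J (v @ [x]))"
      using wlen_snoc[of J v x] vy(1) x I by auto
    have v': "v @ [x] \<in> lists J" and y': "x # y \<in> lists I" using vy(1,2) x I by auto
    have "ceq ((v @ [x]) @ (x # y)) (v @ y)"
      using ceq_append_cong[OF ceq_snoc_square[of x "[]"], of v y] x I by auto
    then have "ceq ((v @ [x]) @ (x # y)) w" using vy(3) by (rule ceq_trans)
    then have "wlen J w = wlen J ((v @ [x]) @ (x # y))" by (rule wlen_ceq[symmetric])
    also have "\<dots> \<le> wlen J (v @ [x]) + wlen J (x # y)" using v' y' I by (intro wlen_append) auto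
    also have "\<dots> \<le> wlen J (v @ [x]) + wlen I (x # y)" using wlen_antimono[OF I y'] by simp
    finally have ge: "wlen J w \<le> wlen J (v @ [x]) + wlen I (x # y)" .
    have "wlen I (x # y) \<le> Suc (wlen I y)"
      using wlen_append[of "[x]" I y] wlen_singleton[OF x] x vy(2) by simp
    then have "Q (wlen J (v @ [x]))"
      unfolding Q_def using v' y' \<open>ceq ((v @ [x]) @ (x # y)) w\<close> ge shorter vy(5)
      by (intro exI[of _ "v @ [x]"] exI[of _ "x # y"]) auto
    then have "k0 \<le> wlen J (v @ [x])" unfolding k0_def by (rule Least_le)
    then show False using shorter vy(4) by simp
  qed
  then show thesis using that vy \<open>k0 \<le> wlen J v0\<close> by simp
qed

lemma wlen_snoc_greater_right_factor:
  assumes I: "I \<subseteq> J" "s \<in> I" and v: "v \<in> lists J" and y: "y \<in> lists I"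
    and vy: "ceq (v @ y) w" "wlen J v + wlen I y = wlen J w" and up: "wlen J w < wlen J (w @ [s])"
  shows "wlen I y < wlen I (y @ [s])"
proof (rule ccontr)
  assume "\<not> wlen I y < wlen I (y @ [s])"
  then have shorter: "wlen I y = Suc (wlen I (y @ [s]))" using wlen_snoc[OF I(1) y I(2)] by auto
  have "ceq (v @ y @ [s]) (w @ [s])" using ceq_append_cong[OF vy(1), of "[]" "[s]"] by simp
  then have "wlen J (w @ [s]) = wlen J (v @ (y @ [s]))" by (rule wlen_ceq[symmetric])
  also have "\<dots> \<le> wlen J v + wlen J (y @ [s])" using v y I by (intro wlen_append) auto
  also have "\<dots> \<le> wlen J v + wlen I (y @ [s])" using wlen_antimono[OF I(1)] y I by simp
  finally show False using shorter vy(2) up by simp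
qed

text \<open>Factor \<open>w = v y\<close> with \<open>y\<close> in the dihedral subgroup of \<open>s\<close> and the last letter \<open>t\<close>
  of a reduced word for \<open>w\<close>, and \<open>v\<close> of minimal length; then induction applies to \<open>v\<close>,
  and the dihedral case to \<open>y\<close>.\<close>

lemma rho_root_nonneg:
  assumes "w \<in> lists J" "s \<in> J" "wlen J w < wlen J (w @ [s])"
  shows "0 \<le> rho w (simple_root s) z"
  using assms
proof (induction "wlen J w" arbitrary: w s z rule: less_induct)
  case less
  obtain r where r: "reduced J r" "ceq r w" using obtain_reduced[OF less.prems(1)] .
  have rho_w: "rho w = rho r" using ceq_rho[OF r(2)] by simp
  show ?case
  proof (cases "r = []")
    case True
    then show ?thesis using rho_w by (simp add: simple_root_def)
  next
    case False
    define t where "t = last r"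
    define r' where "r' = butlast r"
    have r_eq: "r = r' @ [t]" using False unfolding t_def r'_def by simp
    have rJ: "r \<in> lists J" and len_r: "length r = wlen J w"
      using r wlen_ceq[OF r(2)] unfolding reduced_def by auto
    have t: "t \<in> J" using rJ False unfolding t_def by auto
    have r': "reduced J r'" using reduced_butlast[OF r(1) False] unfolding r'_def .
    then have r'J: "r' \<in> lists J" and len_r': "wlen J r' + 1 = wlen J w"
      using len_r r_eq unfolding reduced_def by auto
    have "wlen J r < wlen J (r @ [s])"
      using less.prems(3) wlen_ceq[OF r(2)] wlen_ceq[OF ceq_append_cong[OF r(2), of "[]" "[s]"]] by simp
    then have "t \<noteq> s" using reduced_last_ne[OF order_refl r(1) False] unfolding t_def by blast
    define I where "I = {s, t}"
    have I: "I \<subseteq> J" "s \<in> I" "t \<in> I" using less.prems(2) t unfolding I_def by auto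
    obtain v y where v: "v \<in> lists J" and y: "y \<in> lists I" and vy: "ceq (v @ y) w"
      and len_vy: "wlen J v + wlen I y = wlen J w" and len_v: "wlen J v \<le> wlen J r'"
      and v_up: "\<And>x. x \<in> I \<Longrightarrow> wlen J v < wlen J (v @ [x])"
      using obtain_minimal_factorization[OF I(1) r'J, of "[t]" w] r(2) r_eq len_r'
        wlen_singleton[OF I(3)] I
      by auto
    have IH: "0 \<le> rho v (simple_root x) z'" if "x \<in> I" for x z'
      using less.hyps[of v x z'] v v_up[OF that] len_v len_r' that I(1) by auto
    have y_up: "wlen I y < wlen I (y @ [s])"
      using wlen_snoc_greater_right_factor[OF I(1,2) v y vy len_vy less.prems(3)] .
    obtain y' where y': "reduced I y'" "ceq y' y" using obtain_reduced[OF y] .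
    have "wlen I y' < wlen I (y' @ [s])"
      using y_up wlen_ceq[OF y'(2)] wlen_ceq[OF ceq_append_cong[OF y'(2), of "[]" "[s]"]] by simp
    then obtain a b where ab: "0 \<le> a" "0 \<le> b"
      "rho y' (simple_root s) = (\<lambda>z. a * simple_root s z + b * simple_root t z)"
      using dihedral_root_nonneg[of s t y'] y'(1) I \<open>t \<noteq> s\<close> unfolding I_def by auto
    have "rho w (simple_root s) = rho v (rho y' (simple_root s))"
      using ceq_rho[OF vy] ceq_rho[OF y'(2)] by (metis rho_append)
    also have "\<dots> = (\<lambda>z. a * rho v (simple_root s) z + b * rho v (simple_root t) z)"
      by (simp only: ab(3) rho_linear)
    finally show ?thesis using ab(1,2) IH I by simp
  qed
qed

lemma ceq_Nil_if_rho_fixes_roots: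
  assumes w: "w \<in> lists J" and fixed: "\<forall>s\<in>J. rho w (simple_root s) = simple_root s"
  shows "ceq w []"
proof -
  obtain r where r: "reduced J r" "ceq r w" using obtain_reduced[OF w] .
  have "r = []"
  proof (rule ccontr)
    assume "r \<noteq> []"
    define s where "s = last r"
    have rJ: "r \<in> lists J" using r(1) by (simp add: reduced_def)
    then have s: "s \<in> J" "s \<in> S" using \<open>r \<noteq> []\<close> J_subset unfolding s_def by auto
    have r_eq: "r = butlast r @ [s]" using \<open>r \<noteq> []\<close> unfolding s_def by simp
    have "reduced J (butlast r)" using reduced_butlast[OF r(1) \<open>r \<noteq> []\<close>] .
    then have "wlen J (butlast r) < wlen J (butlast r @ [s])"
      using r(1) r_eq \<open>r \<noteq> []\<close> unfolding reduced_def
      by (metis length_butlast diff_less zero_less_one length_greater_0_conv)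
    then have "0 \<le> rho (butlast r) (simple_root s) s"
      using rho_root_nonneg[of "butlast r" s s] \<open>reduced J (butlast r)\<close> s unfolding reduced_def by auto
    moreover have "rho r (simple_root s) = (\<lambda>z. - rho (butlast r) (simple_root s) z)"
      using rho_linear[of "butlast r" "-1" "simple_root s" 0 "simple_root s"] s(2)
      by (subst r_eq) (simp add: rho_append reflection_root_self)
    moreover have "rho r (simple_root s) = simple_root s" using fixed s ceq_rho[OF r(2)] by simp
    ultimately have "simple_root s = (\<lambda>z. - rho (butlast r) (simple_root s) z)" by simp
    from fun_cong[OF this, of s] have "simple_root s s = - rho (butlast r) (simple_root s) s" by simp
    then show False using \<open>0 \<le> rho (butlast r) (simple_root s) s\<close> by (simp add: simple_root_def)
  qed
  then show ?thesis using r(2) by (simp add: ceq_sym)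
qed

lemma ceq_if_rho_eq:
  assumes u: "u \<in> lists J" and u': "u' \<in> lists J" and eq: "rho u = rho u'"
  shows "ceq u u'"
proof -
  have "set u' \<subseteq> S" using u' J_subset by auto
  then have "\<forall>s\<in>J. rho (u @ rev u') (simple_root s) = simple_root s"
    using eq rho_append_rev by (simp add: rho_append)
  then have "ceq (u @ rev u') []" using u u' by (intro ceq_Nil_if_rho_fixes_roots) auto
  then have to_u': "ceq (u @ rev u' @ u') u'" using ceq_append_cong[of "u @ rev u'" "[]" "[]" u'] by simp
  have "rev u' \<in> lists J" using u' by (auto simp: in_lists_conv_set)
  then have to_u: "ceq (u @ rev u' @ u') u"
    using ceq_append_cong[OF ceq_append_rev[of "rev u'"], of u "[]"] by simp
  show ?thesis using ceq_trans[OF ceq_sym[OF to_u] to_u'] .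
qed

end

context artin_system
begin

lemma Sf_subset_closed:
  assumes T: "T \<in> Sf S E m" and T': "T' \<subseteq> T"
  shows "T' \<in> Sf S E m"
proof -
  have TS: "T \<subseteq> S" using T unfolding Sf_def by auto
  then interpret T: coxeter_parabolic S E m T by unfold_locales
  interpret T': coxeter_parabolic S E m T' using TS T' by unfold_locales auto
  define cls where "cls J w = {u \<in> lists J. cox_eq E m J u w}" for J w
  define rep where "rep C = rho (SOME u. u \<in> C)" for C :: "'a list set"
  txt \<open>\<open>rep\<close> reads off the geometric representation of a class; on \<open>W\<^sub>T\<^sub>'\<close> it is injective
    by faithfulness and it takes values among those of \<open>W\<^sub>T\<close>, which are finitely many.\<close>
  have rep_cls: "rep (cls J w) = rho w" if "J \<subseteq> S" "w \<in> lists J" for J w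
  proof -
    interpret J: coxeter_parabolic S E m J using that by unfold_locales
    have "w \<in> cls J w" unfolding cls_def using that cox_eq.refl by blast
    then have "(SOME u. u \<in> cls J w) \<in> cls J w" by (rule someI)
    then show ?thesis unfolding rep_def cls_def using J.ceq_rho by blast
  qed
  have "rep ` cls T' ` lists T' \<subseteq> rep ` cls T ` lists T"
    using rep_cls TS T' by (auto simp: image_image intro!: image_eqI lists_mono[THEN subsetD])
  moreover have "finite (cls T ` lists T)"
    using T unfolding Sf_def coxeter_finite_def cls_def by simp
  ultimately have "finite (rep ` cls T' ` lists T')" by (meson finite_imageI finite_subset)
  moreover have "inj_on rep (cls T' ` lists T')"
  proof (rule inj_onI)
    fix C1 C2 assume C: "C1 \<in> cls T' ` lists T'" "C2 \<in> cls T' ` lists T'" "rep C1 = rep C2"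
    obtain w1 where w1: "w1 \<in> lists T'" "C1 = cls T' w1" using C(1) by blast
    obtain w2 where w2: "w2 \<in> lists T'" "C2 = cls T' w2" using C(2) by blast
    have "rho w1 = rho w2" using C(3) w1 w2 rep_cls TS T' by (metis subset_trans)
    then have "cox_eq E m T' w1 w2" using T'.ceq_if_rho_eq w1(1) w2(1) by blast
    then show "C1 = C2" unfolding w1 w2 cls_def by (meson T'.ceq_sym T'.ceq_trans)
  qed
  ultimately have "finite (cls T' ` lists T')" by (rule finite_imageD)
  then show ?thesis using TS T' unfolding Sf_def coxeter_finite_def cls_def by auto
qed

section \<open>Cosets of parabolic subgroups\<close>

abbreviation aeq :: "'a word \<Rightarrow> 'a word \<Rightarrow> bool" where
  "aeq \<equiv> artin_eq S E m"

abbreviation ac :: "'a word \<Rightarrow> 'a word set" where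
  "ac \<equiv> acls S E m"

abbreviation words :: "'a set \<Rightarrow> 'a word set" where
  "words U \<equiv> lists (U \<times> (UNIV :: bool set))"

lemma aeq_sym: "aeq u w \<Longrightarrow> aeq w u"
  and aeq_trans: "aeq u v \<Longrightarrow> aeq v w \<Longrightarrow> aeq u w"
  by (fact artin_eq.sym artin_eq.trans)+

lemma aeq_append_cong: "aeq u w \<Longrightarrow> aeq (x @ u @ y) (x @ w @ y)"
proof (induction rule: artin_eq.induct)
  case (refl w)
  show ?case by (rule artin_eq.refl)
next
  case (sym u v)
  show ?case using sym.IH by (rule aeq_sym)
next
  case (trans u v w)
  show ?case using trans.IH by (rule aeq_trans)
next
  case (cancel s u b v)
  then show ?case using artin_eq.cancel[where u = "x @ u" and v = "v @ y" and E = E and m = m] by simp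
next
  case (braid s t u v)
  then show ?case using artin_eq.braid[where u = "x @ u" and v = "v @ y" and S = S] by simp
qed

text \<open>The geometric representation separates \<open>t\<close> from \<open>A\<^sub>U\<close>: \<open>t\<close> negates \<open>\<alpha>\<^sub>t\<close>, while the
  reflections in \<open>U\<close> leave the \<open>t\<close>-coordinate of every vector unchanged.\<close>

lemma not_aeq_letter_parabolic:
  assumes "t \<in> S" "t \<notin> U" "v \<in> words U"
  shows "\<not> aeq [(t, True)] v"
proof
  assume "aeq [(t, True)] v"
  from rho_artin_eq[OF this] have "rho [t] = rho (map fst v)" by simp
  moreover have "t \<notin> set (map fst v)" using assms by auto
  then have "rho (map fst v) (simple_root t) t = 1" by (simp add: rho_coordinate_unchanged simple_root_def)
  ultimately have "rho [t] (simple_root t) t = 1" by simp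
  then show False using assms(1) by (simp add: reflection_root_self) (simp add: simple_root_def)
qed

definition word_inv :: "'a word \<Rightarrow> 'a word" where
  "word_inv w = rev (map (\<lambda>(s, b). (s, \<not> b)) w)"

lemma word_inv_simps [simp]:
  "word_inv [] = []" "word_inv (x # w) = word_inv w @ [(fst x, \<not> snd x)]"
  unfolding word_inv_def by (auto simp: case_prod_beta)

lemma word_inv_words: "v \<in> words U \<Longrightarrow> word_inv v \<in> words U"
  unfolding word_inv_def by auto

lemma aeq_append_word_inv: "w \<in> words S \<Longrightarrow> aeq (w @ word_inv w) []"
proof (induction w)
  case (Cons x w)
  obtain s b where x: "x = (s, b)" by (cases x)
  have s: "s \<in> S" using Cons.prems x by auto
  have "aeq ([x] @ (w @ word_inv w) @ [(s, \<not> b)]) ([x] @ [] @ [(s, \<not> b)])"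
    using Cons by (intro aeq_append_cong) auto
  moreover have "aeq ([] @ [(s, b), (s, \<not> b)] @ []) ([] @ [])" by (rule artin_eq.cancel[OF s])
  ultimately show ?case using x aeq_trans by simp
qed (simp add: artin_eq.refl)

lemma aeq_word_inv_append: "w \<in> words S \<Longrightarrow> aeq (word_inv w @ w) []"
proof (induction w)
  case (Cons x w)
  obtain s b where x: "x = (s, b)" by (cases x)
  have s: "s \<in> S" using Cons.prems x by auto
  have "aeq (word_inv w @ [(s, \<not> b), (s, \<not> \<not> b)] @ w) (word_inv w @ w)"
    by (rule artin_eq.cancel[OF s])
  then show ?case using Cons x aeq_trans by simp
qed (simp add: artin_eq.refl)

lemma aeq_left_cancel:
  assumes b: "b \<in> words S" and eq: "aeq (b @ x) (b @ y)"
  shows "aeq x y"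
proof -
  have "aeq (word_inv b @ b @ z) z" for z
    using aeq_append_cong[OF aeq_word_inv_append[OF b], of "[]" z] by simp
  moreover have "aeq (word_inv b @ b @ x) (word_inv b @ b @ y)"
    using aeq_append_cong[OF eq, of "word_inv b" "[]"] by simp
  ultimately show ?thesis by (meson aeq_sym aeq_trans)
qed

lemma ac_eq:
  assumes "aeq x y"
  shows "ac x = ac y"
proof -
  have "aeq u x \<longleftrightarrow> aeq u y" for u using assms by (meson aeq_sym aeq_trans)
  then show ?thesis by (simp add: acls_def)
qed

lemma mem_ac: "x \<in> words S \<Longrightarrow> x \<in> ac x"
  unfolding acls_def by (auto intro: artin_eq.refl)

lemma ac_subset_words: "ac x \<subseteq> words S"
  unfolding acls_def by auto

lemma ac_eqD: "x \<in> words S \<Longrightarrow> ac x = ac y \<Longrightarrow> aeq x y"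
  using mem_ac unfolding acls_def by blast

lemma ac_eq_if_mem: "a \<in> ac x \<Longrightarrow> ac a = ac x"
  using ac_eq unfolding acls_def by blast

lemma coset_ac:
  assumes "w \<in> words S"
  shows "coset S E m (ac w) U = {ac (w @ v) | v. v \<in> words U}"
proof -
  have "ac (a @ v) = ac (w @ v)" if "a \<in> ac w" for a v
  proof -
    have "aeq a w" using that unfolding acls_def by blast
    then show ?thesis using ac_eq[OF aeq_append_cong[of a w "[]" v]] by simp
  qed
  then show ?thesis unfolding coset_def using mem_ac[OF assms] by blast
qed

lemma ac_append_mem_coset: "w \<in> words S \<Longrightarrow> v \<in> words U \<Longrightarrow> ac (w @ v) \<in> coset S E m (ac w) U"
  by (auto simp: coset_ac)

lemma coset_ac_append:
  assumes w: "w \<in> words S" and U: "U \<subseteq> S" and v: "v \<in> words U"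
  shows "coset S E m (ac (w @ v)) U = coset S E m (ac w) U"
proof (intro equalityI subsetI)
  have vS: "v \<in> words S" and wv: "w @ v \<in> words S" using v w U by auto
  {
    fix g assume "g \<in> coset S E m (ac (w @ v)) U"
    then obtain v' where v': "v' \<in> words U" "g = ac (w @ v @ v')" using coset_ac[OF wv] by auto
    then show "g \<in> coset S E m (ac w) U" using ac_append_mem_coset[OF w, of "v @ v'"] v by simp
  next
    fix g assume "g \<in> coset S E m (ac w) U"
    then obtain v' where v': "v' \<in> words U" "g = ac (w @ v')" using coset_ac[OF w] by auto
    have "ac (w @ v') = ac ((w @ v) @ word_inv v @ v')"
      using aeq_append_cong[OF aeq_append_word_inv[OF vS], of w v'] by (simp add: ac_eq)
    then show "g \<in> coset S E m (ac (w @ v)) U"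
      using ac_append_mem_coset[OF wv, of "word_inv v @ v'"] word_inv_words[OF v] v' by simp
  }
qed

lemma coset_mono:
  assumes "w \<in> words S" "U \<subseteq> U'"
  shows "coset S E m (ac w) U \<subseteq> coset S E m (ac w) U'"
proof -
  have "words U \<subseteq> words U'" using assms(2) by (intro lists_mono) auto
  then show ?thesis unfolding coset_ac[OF assms(1)] by blast
qed

lemma ac_snoc_mem_coset_iff:
  assumes w: "w \<in> words S" and s: "s \<in> S"
  shows "ac (w @ [(s, True)]) \<in> coset S E m (ac w) U \<longleftrightarrow> s \<in> U"
proof
  assume "ac (w @ [(s, True)]) \<in> coset S E m (ac w) U"
  then obtain v where v: "v \<in> words U" "ac (w @ [(s, True)]) = ac (w @ v)"
    using coset_ac[OF w] by auto
  have "aeq (w @ [(s, True)]) (w @ v)" using ac_eqD v(2) w s by simp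
  then have "aeq [(s, True)] v" using aeq_left_cancel[OF w] by blast
  then show "s \<in> U" using not_aeq_letter_parabolic[OF s _ v(1)] by blast
next
  assume "s \<in> U"
  then show "ac (w @ [(s, True)]) \<in> coset S E m (ac w) U" using ac_append_mem_coset[OF w] by simp
qed

lemma coset_subset_iff:
  assumes w: "w \<in> words S" and U: "U \<subseteq> S"
  shows "coset S E m (ac w) U \<subseteq> coset S E m (ac w) U' \<longleftrightarrow> U \<subseteq> U'"
proof
  assume sub: "coset S E m (ac w) U \<subseteq> coset S E m (ac w) U'"
  show "U \<subseteq> U'"
  proof
    fix s assume "s \<in> U"
    then show "s \<in> U'" using sub U ac_snoc_mem_coset_iff[OF w, of s] by blast
  qed
qed (rule coset_mono[OF w])

lemma obtain_coset_word:
  assumes w: "w \<in> words S" and a: "a \<in> words S"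
    and eq: "coset S E m (ac w) U = coset S E m (ac a) U'"
  obtains v where "v \<in> words U'" "ac w = ac (a @ v)"
proof -
  have "ac w \<in> coset S E m (ac w) U" using ac_append_mem_coset[OF w, of "[]" U] by simp
  then have "ac w \<in> coset S E m (ac a) U'" by (simp only: eq)
  then obtain v where "v \<in> words U'" "ac w = ac (a @ v)" unfolding coset_ac[OF a] by blast
  then show thesis by (rule that)
qed

lemma coset_eq_imp_generators_eq:
  assumes w: "w \<in> words S" and a: "a \<in> words S" and U: "U \<subseteq> S" "U' \<subseteq> S"
    and eq: "coset S E m (ac w) U = coset S E m (ac a) U'"
  shows "U = U'"
proof -
  obtain v where v: "v \<in> words U'" "ac w = ac (a @ v)" using obtain_coset_word[OF w a eq] .
  then have "coset S E m (ac w) U' = coset S E m (ac w) U" using coset_ac_append[OF a U(2)] eq by simp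
  then show ?thesis using coset_subset_iff[OF w U(1), of U'] coset_subset_iff[OF w U(2), of U] by auto
qed

lemma coset_eq_imp_coset_eq_superset:
  assumes w: "w \<in> words S" and a: "a \<in> words S" and V: "U \<subseteq> V" "V \<subseteq> S"
    and eq: "coset S E m (ac w) U = coset S E m (ac a) U"
  shows "coset S E m (ac w) V = coset S E m (ac a) V"
proof -
  obtain v where v: "v \<in> words U" "ac w = ac (a @ v)" using obtain_coset_word[OF w a eq] .
  moreover have "words U \<subseteq> words V" using V(1) by (intro lists_mono) auto
  ultimately have "v \<in> words V" by blast
  then show ?thesis using coset_ac_append[OF a V(2)] v(2) by simp
qed

section \<open>Classes in the monoid\<close>

lemma pos_words_subset_words: "pos_words U \<subseteq> words U"
  unfolding pos_words_def by auto

lemma obtain_pos_word: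
  assumes "\<beta> \<in> artin_monoid S E m"
  obtains b where "b \<in> pos_words S" "b \<in> words S" "\<beta> = ac b"
  using assms pos_words_subset_words unfolding artin_monoid_def by blast

lemma ac_eq_if_mem_monoid:
  assumes "\<gamma> \<in> artin_monoid S E m" "a \<in> \<gamma>"
  shows "\<gamma> = ac a" "a \<in> words S"
proof -
  obtain c where "\<gamma> = ac c" using obtain_pos_word[OF assms(1)] by blast
  then show "\<gamma> = ac a" "a \<in> words S" using assms(2) ac_eq_if_mem ac_subset_words by blast+
qed

lemma simT_imp_coset_eq:
  assumes U: "U \<subseteq> S" and sim: "simT S E m U \<gamma> \<delta>"
  shows "coset S E m \<gamma> U = coset S E m \<delta> U"
proof -
  from sim have mon: "\<gamma> \<in> artin_monoid S E m" "\<delta> \<in> artin_monoid S E m"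
    and "\<exists>a b t t'. a \<in> \<gamma> \<and> b \<in> \<delta> \<and> t \<in> pos_words U \<and> t' \<in> pos_words U \<and>
      ac (a @ t) = ac (b @ t')"
    unfolding simT_def by simp_all
  then obtain a b t t' where a: "a \<in> \<gamma>" and b: "b \<in> \<delta>" and t: "t \<in> words U" "t' \<in> words U"
    and eq: "ac (a @ t) = ac (b @ t')"
    using pos_words_subset_words by blast
  have "coset S E m (ac a) U = coset S E m (ac b) U"
    using coset_ac_append[of a U t] coset_ac_append[of b U t'] ac_eq_if_mem_monoid mon a b U t eq
    by simp
  then show ?thesis using ac_eq_if_mem_monoid mon a b by simp
qed

lemma simT_rtranclp_imp_coset_eq:
  assumes "U \<subseteq> S"
  shows "(simT S E m U)\<^sup>*\<^sup>* \<gamma> \<delta> \<Longrightarrow> coset S E m \<gamma> U = coset S E m \<delta> U"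
  by (induction rule: rtranclp_induct) (auto dest: simT_imp_coset_eq[OF assms])

lemma ac_snoc_mem_mcls:
  assumes b: "b \<in> pos_words S" and s: "s \<in> U" "U \<subseteq> S"
  shows "ac (b @ [(s, True)]) \<in> mcls S E m U (ac b)"
proof -
  have bs: "b @ [(s, True)] \<in> pos_words S" using b s unfolding pos_words_def by auto
  have "simT S E m U (ac b) (ac (b @ [(s, True)]))"
    unfolding simT_def
  proof (intro conjI exI)
    show "ac b \<in> artin_monoid S E m" "ac (b @ [(s, True)]) \<in> artin_monoid S E m"
      using b bs unfolding artin_monoid_def by blast+
    show "b \<in> ac b" "b @ [(s, True)] \<in> ac (b @ [(s, True)])"
      using b bs pos_words_subset_words mem_ac by blast+
    show "[(s, True)] \<in> pos_words U" "[] \<in> pos_words U" using s unfolding pos_words_def by auto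
  qed simp
  then show ?thesis unfolding mcls_def by auto
qed

lemma mcls_mono: "U \<subseteq> U' \<Longrightarrow> mcls S E m U \<beta> \<subseteq> mcls S E m U' \<beta>"
proof -
  assume "U \<subseteq> U'"
  then have "pos_words U \<subseteq> pos_words U'" unfolding pos_words_def by (intro lists_mono) auto
  then have "simT S E m U \<le> simT S E m U'" unfolding simT_def by blast
  then show ?thesis unfolding mcls_def by (auto dest: rtranclp_mono[THEN predicate2D])
qed

text \<open>Inclusion of monoid cosets \<open>[\<beta>]\<^sub>U \<subseteq> [\<beta>']\<^sub>U\<^sub>'\<close> forces \<open>U \<subseteq> U'\<close>: each \<open>\<beta>s\<close> with
  \<open>s \<in> U\<close> lies in \<open>[\<beta>]\<^sub>U\<close>, so \<open>\<beta>s \<in> \<beta>A\<^sub>U\<^sub>'\<close>.\<close>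

lemma coset_subset_if_mcls_subset:
  assumes \<beta>: "\<beta> \<in> artin_monoid S E m" and U: "U \<subseteq> S" "U' \<subseteq> S"
    and sub: "mcls S E m U \<beta> \<subseteq> mcls S E m U' \<beta>'"
  shows "coset S E m \<beta> U \<subseteq> coset S E m \<beta>' U'"
proof -
  obtain b where b: "b \<in> pos_words S" "b \<in> words S" "\<beta> = ac b" using obtain_pos_word[OF \<beta>] .
  have coset_at: "coset S E m \<beta>' U' = coset S E m \<gamma> U'" if "\<gamma> \<in> mcls S E m U \<beta>" for \<gamma>
    using that sub simT_rtranclp_imp_coset_eq[OF U(2)] unfolding mcls_def by blast
  have "U \<subseteq> U'"
  proof
    fix s assume s: "s \<in> U"
    have "ac (b @ [(s, True)]) \<in> coset S E m (ac (b @ [(s, True)])) U'"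
      using ac_append_mem_coset[of "b @ [(s, True)]" "[]" U'] b s U by auto
    also have "\<dots> = coset S E m (ac b) U'"
      using coset_at[OF ac_snoc_mem_mcls[OF b(1) s U(1), folded b(3)]] coset_at[of \<beta>] b(3)
      by (simp add: mcls_def)
    finally show "s \<in> U'" using ac_snoc_mem_coset_iff[OF b(2)] s U by blast
  qed
  then have "coset S E m \<beta> U \<subseteq> coset S E m \<beta> U'" using coset_mono[OF b(2)] b(3) by simp
  also have "\<dots> = coset S E m \<beta>' U'" using coset_at[of \<beta>] by (simp add: mcls_def)
  finally show ?thesis .
qed

lemma coset_eq_if_mcls_eq:
  assumes "\<beta> \<in> artin_monoid S E m" "\<beta>' \<in> artin_monoid S E m" "U \<subseteq> S" "U' \<subseteq> S"
    and "mcls S E m U \<beta> = mcls S E m U' \<beta>'"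
  shows "coset S E m \<beta> U = coset S E m \<beta>' U'"
  using coset_subset_if_mcls_subset assms by (metis order_refl subset_antisym)

section \<open>Upward links\<close>

lemma Sf_subset_S: "T \<in> Sf S E m \<Longrightarrow> T \<subseteq> S"
  unfolding Sf_def by blast

lemma toggle_subset: "T0 \<subseteq> T2 \<Longrightarrow> s \<in> T2 \<Longrightarrow> toggle T0 s \<subseteq> T2"
  unfolding toggle_def by auto

lemma iota_set_link_simplex:
  assumes \<beta>: "\<beta> \<in> artin_monoid S E m" and T2: "T2 \<in> Sf S E m" and T0: "T0 \<subseteq> T2"
  shows "iota_set S E m {mcls S E m (toggle T0 s) \<beta> | s. s \<in> T2 - T1} =
         {coset S E m \<beta> (toggle T0 s) | s. s \<in> T2 - T1}"
proof (intro equalityI subsetI)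
  have Sf: "toggle T0 s \<in> Sf S E m" if "s \<in> T2" for s
    using Sf_subset_closed[OF T2 toggle_subset[OF T0 that]] .
  {
    fix g assume "g \<in> iota_set S E m {mcls S E m (toggle T0 s) \<beta> | s. s \<in> T2 - T1}"
    then obtain \<alpha>' T' s where g: "g = coset S E m \<alpha>' T'" and \<alpha>': "\<alpha>' \<in> artin_monoid S E m"
      and T': "T' \<in> Sf S E m" and s: "s \<in> T2 - T1"
      and eq: "mcls S E m T' \<alpha>' = mcls S E m (toggle T0 s) \<beta>"
      unfolding iota_set_def by blast
    have "g = coset S E m \<beta> (toggle T0 s)"
      using coset_eq_if_mcls_eq[OF \<alpha>' \<beta> Sf_subset_S[OF T'] Sf_subset_S[OF Sf] eq] s g by simp
    then show "g \<in> {coset S E m \<beta> (toggle T0 s) | s. s \<in> T2 - T1}" using s by blast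
  next
    fix g assume "g \<in> {coset S E m \<beta> (toggle T0 s) | s. s \<in> T2 - T1}"
    then obtain s where "g = coset S E m \<beta> (toggle T0 s)" "s \<in> T2 - T1" by blast
    then show "g \<in> iota_set S E m {mcls S E m (toggle T0 s) \<beta> | s. s \<in> T2 - T1}"
      unfolding iota_set_def using Sf \<beta> by blast
  }
qed

lemma iota_uplinkP_subset_uplinkD:
  assumes \<alpha>: "\<alpha> \<in> artin_monoid S E m" and T: "T \<in> Sf S E m"
  shows "iota_set S E m ` uplinkP S E m (mcls S E m T \<alpha>) \<subseteq> uplinkD S E m (coset S E m \<alpha> T)"
proof
  fix \<sigma> assume "\<sigma> \<in> iota_set S E m ` uplinkP S E m (mcls S E m T \<alpha>)"
  then obtain \<sigma>' where \<sigma>: "\<sigma> = iota_set S E m \<sigma>'" and up: "\<forall>u\<in>\<sigma>'. mcls S E m T \<alpha> \<subseteq> u"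
    and "\<sigma>' \<in> linkP S E m (mcls S E m T \<alpha>)"
    unfolding uplinkP_def by blast
  then obtain \<beta> T0 T1 T2 where \<beta>: "\<beta> \<in> artin_monoid S E m"
    and T: "T1 \<in> Sf S E m" "T2 \<in> Sf S E m" "T1 \<subset> T2" "T1 \<subseteq> T0" "T0 \<subseteq> T2"
    and vertex: "mcls S E m T0 \<beta> = mcls S E m T \<alpha>"
    and \<sigma>': "\<sigma>' = {mcls S E m (toggle T0 s) \<beta> | s. s \<in> T2 - T1}"
    unfolding linkP_def by blast
  have T2S: "T2 \<subseteq> S" using Sf_subset_S[OF T(2)] .
  have \<sigma>_eq: "\<sigma> = {coset S E m \<beta> (toggle T0 s) | s. s \<in> T2 - T1}"
    using iota_set_link_simplex[OF \<beta> T(2) T(5)] \<sigma> \<sigma>' by simp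
  have "\<beta> \<in> artin_group S E m"
    using \<beta> pos_words_subset_words unfolding artin_monoid_def artin_group_def by blast
  moreover have "coset S E m \<beta> T0 = coset S E m \<alpha> T"
    using coset_eq_if_mcls_eq[OF \<beta> \<alpha> _ Sf_subset_S[OF assms(2)] vertex] T(5) T2S by blast
  ultimately have "\<sigma> \<in> linkD S E m (coset S E m \<alpha> T)"
    unfolding linkD_def \<sigma>_eq using T by blast
  moreover have "coset S E m \<alpha> T \<subseteq> coset S E m \<beta> (toggle T0 s)" if "s \<in> T2 - T1" for s
  proof (rule coset_subset_if_mcls_subset[OF \<alpha> Sf_subset_S[OF assms(2)]])
    show "toggle T0 s \<subseteq> S" using toggle_subset[OF T(5)] that T2S by blast
    show "mcls S E m T \<alpha> \<subseteq> mcls S E m (toggle T0 s) \<beta>" using up that \<sigma>' by blast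
  qed
  ultimately show "\<sigma> \<in> uplinkD S E m (coset S E m \<alpha> T)"
    unfolding uplinkD_def \<sigma>_eq by blast
qed

lemma obtain_uplinkD_simplex:
  assumes \<alpha>: "\<alpha> \<in> artin_monoid S E m" and T: "T \<in> Sf S E m"
    and "\<sigma> \<in> uplinkD S E m (coset S E m \<alpha> T)"
  obtains T2 where "T2 \<in> Sf S E m" "T \<subset> T2" "\<sigma> = {coset S E m \<alpha> (toggle T s) | s. s \<in> T2 - T}"
proof -
  have up: "\<forall>u\<in>\<sigma>. coset S E m \<alpha> T \<subseteq> u" and "\<sigma> \<in> linkD S E m (coset S E m \<alpha> T)"
    using assms(3) unfolding uplinkD_def by auto
  then obtain g T0 T1 T2 where g: "g \<in> artin_group S E m"
    and Ts: "T1 \<in> Sf S E m" "T2 \<in> Sf S E m" "T1 \<subset> T2" "T1 \<subseteq> T0" "T0 \<subseteq> T2"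
    and vertex: "coset S E m g T0 = coset S E m \<alpha> T"
    and \<sigma>: "\<sigma> = {coset S E m g (toggle T0 s) | s. s \<in> T2 - T1}"
    unfolding linkD_def by blast
  have TS: "T \<subseteq> S" and T2S: "T2 \<subseteq> S" using Sf_subset_S T Ts(2) by auto
  then have T0S: "T0 \<subseteq> S" using Ts(5) by blast
  obtain w where w: "w \<in> words S" "g = ac w" using g unfolding artin_group_def by blast
  obtain a where a: "a \<in> words S" "\<alpha> = ac a" using obtain_pos_word[OF \<alpha>] by blast
  have T0: "T0 = T" using coset_eq_imp_generators_eq[OF w(1) a(1) T0S TS] vertex w(2) a(2) by simp
  have T1: "T1 = T"
  proof (rule ccontr)
    assume "T1 \<noteq> T"
    then obtain s where s: "s \<in> T0" "s \<notin> T1" using Ts(4) T0 by blast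
    then have "coset S E m g (T0 - {s}) \<in> \<sigma>" using \<sigma> Ts(5) by (auto simp: toggle_def)
    then have "coset S E m \<alpha> T \<subseteq> coset S E m g (T0 - {s})" using up by blast
    then have "coset S E m (ac w) T0 \<subseteq> coset S E m (ac w) (T0 - {s})" using vertex w(2) by simp
    then have "T0 \<subseteq> T0 - {s}" using coset_subset_iff[OF w(1) T0S, of "T0 - {s}"] by simp
    then show False using s(1) by blast
  qed
  have "coset S E m g (toggle T s) = coset S E m \<alpha> (toggle T s)" if "s \<in> T2 - T" for s
  proof -
    have "toggle T s = insert s T" "insert s T \<subseteq> S" using that T2S TS by (auto simp: toggle_def)
    then show ?thesis
      using coset_eq_imp_coset_eq_superset[OF w(1) a(1), of T "insert s T"] vertex T0 w(2) a(2)
      by auto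
  qed
  then have "\<sigma> = {coset S E m \<alpha> (toggle T s) | s. s \<in> T2 - T}" using \<sigma> T0 T1 by auto
  then show thesis using that Ts(2,3) T1 by blast
qed

lemma uplinkD_subset_iota_uplinkP:
  assumes \<alpha>: "\<alpha> \<in> artin_monoid S E m" and T: "T \<in> Sf S E m"
  shows "uplinkD S E m (coset S E m \<alpha> T) \<subseteq> iota_set S E m ` uplinkP S E m (mcls S E m T \<alpha>)"
proof
  fix \<sigma> assume "\<sigma> \<in> uplinkD S E m (coset S E m \<alpha> T)"
  then obtain T2 where T2: "T2 \<in> Sf S E m" "T \<subset> T2"
    and \<sigma>: "\<sigma> = {coset S E m \<alpha> (toggle T s) | s. s \<in> T2 - T}"
    using obtain_uplinkD_simplex[OF \<alpha> T] by blast
  define \<sigma>' where "\<sigma>' = {mcls S E m (toggle T s) \<alpha> | s. s \<in> T2 - T}"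
  have "\<sigma>' \<in> linkP S E m (mcls S E m T \<alpha>)"
    unfolding linkP_def \<sigma>'_def using \<alpha> T T2 by blast
  moreover have "mcls S E m T \<alpha> \<subseteq> mcls S E m (toggle T s) \<alpha>" if "s \<in> T2 - T" for s
    using mcls_mono that by (simp add: toggle_def subset_insertI)
  ultimately have "\<sigma>' \<in> uplinkP S E m (mcls S E m T \<alpha>)" unfolding uplinkP_def \<sigma>'_def by blast
  moreover have "iota_set S E m \<sigma>' = \<sigma>"
    unfolding \<sigma>'_def \<sigma> using iota_set_link_simplex[OF \<alpha> T2(1)] T2(2) by blast
  ultimately show "\<sigma> \<in> iota_set S E m ` uplinkP S E m (mcls S E m T \<alpha>)" by blast
qed

end

theorem lemma5p7:
  fixes S :: "'a set" and E :: "('a \<times> 'a) set" and m :: "'a \<Rightarrow> 'a \<Rightarrow> nat"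
    and \<alpha> :: "'a word set" and T :: "'a set"
  assumes "artin_graph S E m"
    and "\<alpha> \<in> artin_monoid S E m"
    and "T \<in> Sf S E m"
  shows "full_subcomplex (iota_set S E m ` uplinkP S E m (mcls S E m T \<alpha>))
                         (uplinkD S E m (coset S E m \<alpha> T))"
proof -
  interpret artin_system S E m by (rule artin_system.intro) fact
  show ?thesis
    using iota_uplinkP_subset_uplinkD[OF assms(2,3)] uplinkD_subset_iota_uplinkP[OF assms(2,3)]
    unfolding full_subcomplex_def by blast
qed

end
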